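(* For any finite alphabet $A$ and any $u\in A^*$: $h({\uparrow}u)=|u|$, and $h(I(\{u\}))=h({\uparrow}u\cup{\downarrow}u)$, which equals $|u|$ if $|A|\geq2$ and $0$ otherwise.
   Context: $u\sqsubseteq v$ (subword) means $u=a_1\cdots a_n$ with letters $a_i$ and $v=v_0a_1v_1\cdots a_nv_n$ for some words $v_i$. ${\uparrow}u=\{v\in A^*~|~u\sqsubseteq v\}$, ${\downarrow}u=\{v\in A^*~|~v\sqsubseteq u\}$. $u\perp v$ means $u\not\sqsubseteq v$ and $v\not\sqsubseteq u$, and $I(L)=\{w\in A^*~|~\exists v\in L: w\perp v\}$. $u\sim_n v$ iff $u,v$ have the same subwords of length at most $n$; $L$ is $n$-PT if it is a union of $\sim_n$-classes, and $h(L)$ is the least such $n$. *)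

theory Defs
  imports Main "HOL-Library.Sublist"
begin

definition up_closure :: "'a set \<Rightarrow> 'a list \<Rightarrow> 'a list set" where
  "up_closure A u = {v \<in> lists A. subseq u v}"

definition down_closure :: "'a list \<Rightarrow> 'a list set" where
  "down_closure u = {v. subseq v u}"

definition incomparable :: "'a list \<Rightarrow> 'a list \<Rightarrow> bool" where
  "incomparable u v \<longleftrightarrow> \<not> subseq u v \<and> \<not> subseq v u"

definition incomp_set :: "'a set \<Rightarrow> 'a list set \<Rightarrow> 'a list set" where
  "incomp_set A L = {w \<in> lists A. \<exists>v\<in>L. incomparable w v}"

definition simon_eq :: "nat \<Rightarrow> 'a list \<Rightarrow> 'a list \<Rightarrow> bool" where
  "simon_eq n u v \<longleftrightarrow>
     {w. subseq w u \<and> length w \<le> n} = {w. subseq w v \<and> length w \<le> n}"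

definition n_PT :: "'a set \<Rightarrow> nat \<Rightarrow> 'a list set \<Rightarrow> bool" where
  "n_PT A n L \<longleftrightarrow>
     L \<subseteq> lists A \<and>
     (\<forall>u\<in>lists A. \<forall>v\<in>lists A. simon_eq n u v \<longrightarrow> (u \<in> L \<longleftrightarrow> v \<in> L))"

definition PT_height :: "'a set \<Rightarrow> 'a list set \<Rightarrow> nat" where
  "PT_height A L = (LEAST n. n_PT A n L)"

end

theory Submission
  imports Defs
begin

text \<open>Write \<open>u = a\<^sub>1 \<cdots> a\<^sub>n\<close> and let \<open>c a\<close> be a word listing the letters of \<open>A\<close> other
  than \<open>a\<close>. The word \<open>w = (c a\<^sub>1) a\<^sub>1 \<cdots> (c a\<^sub>n\<^sub>-\<^sub>1) a\<^sub>n\<^sub>-\<^sub>1 (c a\<^sub>n) (c a\<^sub>n)\<close> does not contain \<open>u\<close>,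
  since an embedding of \<open>u\<close> cannot use any letter of a block \<open>c a\<^sub>i\<close> for \<open>a\<^sub>i\<close> and so never
  finds \<open>a\<^sub>n\<close>; but it contains every word of length \<open>n - 1\<close>. Hence \<open>wu \<sim>\<^sub>n\<^sub>-\<^sub>1 w\<close> although
  \<open>wu \<in> \<up>u\<close> and \<open>w \<notin> \<up>u\<close>; if \<open>|A| \<ge> 2\<close> then also \<open>w \<notin> \<down>u\<close>, as \<open>|w| \<ge> 2n\<close>.
  Conversely \<open>\<up>u\<close> and \<open>\<up>u \<union> \<down>u\<close> are \<open>n\<close>-PT, the latter because a word that is
  \<open>\<sim>\<^sub>n\<close>-equivalent to a subword of \<open>u\<close> is either \<open>u\<close> itself or has length at most \<open>n\<close>.
  Over a unary alphabet every word is comparable with \<open>u\<close>, and \<open>I({u})\<close> is the complement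
  of \<open>\<up>u \<union> \<down>u\<close>, which has the same height.\<close>

fun shadow_word :: "('a \<Rightarrow> 'a list) \<Rightarrow> 'a list \<Rightarrow> 'a list" where
  "shadow_word c [] = []"
| "shadow_word c [a] = c a @ c a"
| "shadow_word c (a # b # u) = c a @ a # shadow_word c (b # u)"

lemma subseq_skip_block:
  assumes "a \<notin> set y" and "subseq (a # u) (y @ r)"
  shows "subseq (a # u) r"
  using assms by (induction y) (auto split: if_splits)

lemma subseq_Cons_block:
  assumes "b \<in> set y" and "subseq z r"
  shows "subseq (b # z) (y @ r)"
proof -
  obtain p q where "y = p @ b # q"
    using assms(1) by (meson split_list)
  moreover have "subseq (b # z) (b # q @ r)"
    using assms(2) by (simp add: subseq_drop_many)
  ultimately show ?thesis
    by (simp add: subseq_drop_many)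
qed

lemma not_subseq_shadow_word:
  assumes "\<And>a. a \<notin> set (c a)" and "u \<noteq> []"
  shows "\<not> subseq u (shadow_word c u)"
  using assms
proof (induction c u rule: shadow_word.induct)
  case (2 c a)
  then show ?case
    by (simp add: subseq_singleton_left)
next
  case (3 c a b u)
  show ?case
  proof
    assume "subseq (a # b # u) (shadow_word c (a # b # u))"
    with "3.prems"(1) have "subseq (a # b # u) (a # shadow_word c (b # u))"
      using subseq_skip_block[of a "c a" "b # u" "a # shadow_word c (b # u)"] by simp
    then have "subseq (b # u) (shadow_word c (b # u))"
      by simp
    with "3.IH" "3.prems"(1) show False
      by simp
  qed
qed simp

lemma subseq_shadow_word:
  assumes "\<And>a. A - {a} \<subseteq> set (c a)"
    and "z \<in> lists A" and "length z < length u"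
  shows "subseq z (shadow_word c u)"
  using assms
proof (induction c u arbitrary: z rule: shadow_word.induct)
  case (3 c a b u)
  show ?case
  proof (cases z)
    case (Cons d z')
    with "3.prems" have IH: "subseq z' (shadow_word c (b # u))"
      by (intro "3.IH") auto
    show ?thesis
    proof (cases "d = a")
      case True
      with IH Cons show ?thesis
        by (simp add: subseq_drop_many)
    next
      case False
      with "3.prems" Cons have "d \<in> set (c a)"
        by auto
      moreover from IH have "subseq z' (a # shadow_word c (b # u))"
        using subseq_drop_many[of z' _ "[a]"] by simp
      ultimately show ?thesis
        using subseq_Cons_block[of d "c a" z' "a # shadow_word c (b # u)"] Cons by simp
    qed
  qed simp
qed auto

lemma shadow_word_in_lists:
  assumes "\<And>a. a \<in> A \<Longrightarrow> set (c a) \<subseteq> A" and "u \<in> lists A"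
  shows "shadow_word c u \<in> lists A"
  using assms by (induction c u rule: shadow_word.induct) auto

lemma length_shadow_word_ge:
  assumes "\<And>a. a \<in> set u \<Longrightarrow> c a \<noteq> []"
  shows "2 * length u \<le> length (shadow_word c u)"
  using assms
proof (induction c u rule: shadow_word.induct)
  case (2 c a)
  then show ?case by (cases "c a") auto
next
  case (3 c a b u)
  then have "c a \<noteq> []" and "2 * length (b # u) \<le> length (shadow_word c (b # u))"
    by auto
  then show ?case by (cases "c a") auto
qed simp

lemma simon_eq_sym: "simon_eq n x y \<Longrightarrow> simon_eq n y x"
  unfolding simon_eq_def by simp

lemma simon_eq_subseq:
  "simon_eq n x y \<Longrightarrow> subseq z x \<Longrightarrow> length z \<le> n \<Longrightarrow> subseq z y"
  unfolding simon_eq_def by blast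

lemma simon_eqI_common_subwords:
  assumes "x \<in> lists A" and "y \<in> lists A"
    and "\<And>z. z \<in> lists A \<Longrightarrow> length z \<le> n \<Longrightarrow> subseq z x \<and> subseq z y"
  shows "simon_eq n x y"
proof -
  have "subseq z y'" if "x' \<in> lists A" "subseq z x'" "length z \<le> n" "y' \<in> {x, y}" for z x' y'
  proof -
    from that(1,2) have "z \<in> lists A"
      by (auto elim: list_emb_set)
    with assms(3) that(3,4) show ?thesis by blast
  qed
  with assms(1,2) show ?thesis
    unfolding simon_eq_def by blast
qed

lemma obtain_separating_word:
  assumes "finite A" and "u \<in> lists A"
  obtains w where "w \<in> lists A" and "u \<noteq> [] \<Longrightarrow> \<not> subseq u w"
    and "2 \<le> card A \<Longrightarrow> u \<noteq> [] \<Longrightarrow> \<not> subseq w u"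
    and "\<And>m. m < length u \<Longrightarrow> simon_eq m (w @ u) w"
proof -
  obtain xs where xs: "set xs = A"
    using assms(1) finite_list by blast
  define c where "c a = filter (\<lambda>x. x \<noteq> a) xs" for a
  have c_avoids: "a \<notin> set (c a)" and c_covers: "A - {a} \<subseteq> set (c a)"
    and c_in: "a \<in> A \<Longrightarrow> set (c a) \<subseteq> A" for a
    unfolding c_def using xs by auto
  define w where "w = shadow_word c u"
  have w_in: "w \<in> lists A"
    unfolding w_def using shadow_word_in_lists c_in assms(2) by blast
  show thesis
  proof
    show "\<not> subseq u w" if "u \<noteq> []"
      unfolding w_def using not_subseq_shadow_word c_avoids that by blast
    show "\<not> subseq w u" if "2 \<le> card A" and "u \<noteq> []"
    proof
      assume "subseq w u"
      have "c a \<noteq> []" if "a \<in> set u" for a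
      proof -
        from \<open>a \<in> set u\<close> assms(2) have "a \<in> A" by auto
        then have "card (A - {a}) = card A - 1"
          by (rule card_Diff_singleton)
        with \<open>2 \<le> card A\<close> have "0 < card (A - {a})"
          by simp
        then have "A - {a} \<noteq> {}"
          unfolding card_gt_0_iff ..
        with c_covers[of a] show ?thesis by auto
      qed
      then have "2 * length u \<le> length w"
        unfolding w_def by (rule length_shadow_word_ge)
      moreover have "length w \<le> length u"
        using \<open>subseq w u\<close> by (rule list_emb_length)
      moreover have "0 < length u"
        using \<open>u \<noteq> []\<close> by simp
      ultimately show False
        by linarith
    qed
    show "simon_eq m (w @ u) w" if "m < length u" for m
    proof (rule simon_eqI_common_subwords)
      show "w @ u \<in> lists A" using w_in assms(2) by simp
      fix z assume "z \<in> lists A" and "length z \<le> m"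
      with that have "length z < length u"
        by simp
      with \<open>z \<in> lists A\<close> have "subseq z w"
        unfolding w_def by (rule subseq_shadow_word[OF c_covers])
      then show "subseq z (w @ u) \<and> subseq z w"
        by (simp add: subseq_rev_drop_many)
    qed (fact w_in)
  qed (fact w_in)
qed

lemma PT_height_eqI:
  assumes "n_PT A n L" and "\<And>m. m < n \<Longrightarrow> \<not> n_PT A m L"
  shows "PT_height A L = n"
  unfolding PT_height_def
  by (rule Least_equality) (use assms in \<open>auto simp: not_less[symmetric]\<close>)

lemma not_n_PT_if_separated:
  assumes "v \<in> lists A" and "w \<in> lists A" and "simon_eq m v w" and "v \<in> L" and "w \<notin> L"
  shows "\<not> n_PT A m L"
  using assms unfolding n_PT_def by blast

lemma n_PT_complement:
  assumes "L \<subseteq> lists A"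
  shows "n_PT A n (lists A - L) = n_PT A n L"
  using assms unfolding n_PT_def by blast

lemma PT_height_complement:
  assumes "L \<subseteq> lists A"
  shows "PT_height A (lists A - L) = PT_height A L"
  unfolding PT_height_def n_PT_complement[OF assms] ..

lemma PT_height_lists: "PT_height A (lists A) = 0"
  unfolding PT_height_def n_PT_def by simp

lemma down_closure_subset_lists: "u \<in> lists A \<Longrightarrow> down_closure u \<subseteq> lists A"
  unfolding down_closure_def by (auto elim: list_emb_set)

lemma n_PT_up_closure: "n_PT A (length u) (up_closure A u)"
  unfolding n_PT_def up_closure_def using simon_eq_subseq simon_eq_sym by blast

lemma subseq_or_subseq_if_simon_eq:
  assumes "simon_eq (length u) v w" and "subseq v u"
  shows "subseq u w \<or> subseq w u"
proof (cases "length w \<le> length u")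
  case True
  with assms(1) have "subseq w v"
    using simon_eq_subseq[OF simon_eq_sym] by blast
  with assms(2) show ?thesis
    using subseq_order.trans by blast
next
  case False
  have "subseq (take (length u) w) v"
    by (rule simon_eq_subseq[OF simon_eq_sym[OF assms(1)]])
      (simp_all add: prefix_imp_subseq take_is_prefix)
  with False have "length u \<le> length v"
    using list_emb_length by fastforce
  with assms(2) have "v = u"
    using subseq_same_length list_emb_length by (metis le_antisym)
  with assms(1) show ?thesis
    using simon_eq_subseq by blast
qed

lemma n_PT_up_down_closure:
  assumes "u \<in> lists A"
  shows "n_PT A (length u) (up_closure A u \<union> down_closure u)"
proof -
  have comparable: "subseq u w \<or> subseq w u"
    if "simon_eq (length u) v w" and "subseq u v \<or> subseq v u" for v w
    using that subseq_or_subseq_if_simon_eq simon_eq_subseq by blast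
  show ?thesis
    unfolding n_PT_def
  proof (intro conjI ballI impI)
    show "up_closure A u \<union> down_closure u \<subseteq> lists A"
      using down_closure_subset_lists[OF assms] unfolding up_closure_def by auto
    fix v w assume "v \<in> lists A" "w \<in> lists A" "simon_eq (length u) v w"
    then show "v \<in> up_closure A u \<union> down_closure u \<longleftrightarrow> w \<in> up_closure A u \<union> down_closure u"
      using comparable[of v w] comparable[of w v] simon_eq_sym
      unfolding up_closure_def down_closure_def by blast
  qed
qed

lemma incomp_set_singleton:
  "incomp_set A {u} = lists A - (up_closure A u \<union> down_closure u)"
  unfolding incomp_set_def incomparable_def up_closure_def down_closure_def by auto

lemma subseq_if_unary_alphabet:
  assumes "\<And>x y. x \<in> A \<Longrightarrow> y \<in> A \<Longrightarrow> x = y"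
    and "v \<in> lists A" and "w \<in> lists A" and "length v \<le> length w"
  shows "subseq v w"
proof -
  have "v = take (length v) w"
  proof (rule nth_equalityI)
    show "v ! i = take (length v) w ! i" if "i < length v" for i
      using assms that by (simp add: in_listsD)
  qed (use assms in simp)
  then show ?thesis
    by (metis prefix_imp_subseq take_is_prefix)
qed

lemma up_down_closure_unary_alphabet:
  assumes "finite A" and "card A < 2" and "u \<in> lists A"
  shows "up_closure A u \<union> down_closure u = lists A"
proof -
  have unary: "x = y" if "x \<in> A" "y \<in> A" for x y
  proof (rule ccontr)
    assume "x \<noteq> y"
    with that assms(1) have "card {x, y} \<le> card A"
      by (intro card_mono) auto
    with assms(2) \<open>x \<noteq> y\<close> show False by simp
  qed
  have "x \<in> up_closure A u \<union> down_closure u" if "x \<in> lists A" for x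
    using subseq_if_unary_alphabet[OF unary assms(3) that]
      subseq_if_unary_alphabet[OF unary that assms(3)] that
    unfolding up_closure_def down_closure_def by (cases "length u \<le> length x") auto
  with down_closure_subset_lists[OF assms(3)] show ?thesis
    unfolding up_closure_def by auto
qed

lemma PT_height_eq_if_separated:
  assumes "n_PT A n L" and "v \<in> lists A" and "w \<in> lists A" and "v \<in> L"
    and "0 < n \<Longrightarrow> w \<notin> L" and "\<And>m. m < n \<Longrightarrow> simon_eq m v w"
  shows "PT_height A L = n"
proof (rule PT_height_eqI)
  show "\<not> n_PT A m L" if "m < n" for m
    using that assms by (intro not_n_PT_if_separated[of v A w m]) auto
qed (fact assms(1))

theorem proposition8:
  fixes A :: "'a set" and u :: "'a list"
  assumes "finite A" and "u \<in> lists A"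
  shows "PT_height A (up_closure A u) = length u
    \<and> PT_height A (incomp_set A {u}) = PT_height A (up_closure A u \<union> down_closure u)
    \<and> PT_height A (up_closure A u \<union> down_closure u) = (if card A \<ge> 2 then length u else 0)"
proof -
  obtain w where w: "w \<in> lists A" "u \<noteq> [] \<Longrightarrow> \<not> subseq u w"
    "2 \<le> card A \<Longrightarrow> u \<noteq> [] \<Longrightarrow> \<not> subseq w u" "\<And>m. m < length u \<Longrightarrow> simon_eq m (w @ u) w"
    using obtain_separating_word[OF assms] by blast
  have wu: "w @ u \<in> lists A" "w @ u \<in> up_closure A u"
    using w(1) assms(2) unfolding up_closure_def by (auto simp: subseq_drop_many)
  have up: "PT_height A (up_closure A u) = length u"
    by (rule PT_height_eq_if_separated[where v = "w @ u" and w = w])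
      (use n_PT_up_closure wu w in \<open>auto simp: up_closure_def\<close>)
  have up_down: "PT_height A (up_closure A u \<union> down_closure u) = (if card A \<ge> 2 then length u else 0)"
  proof (cases "2 \<le> card A")
    case True
    have "PT_height A (up_closure A u \<union> down_closure u) = length u"
      by (rule PT_height_eq_if_separated[where v = "w @ u" and w = w])
        (use n_PT_up_down_closure[OF assms(2)] wu w True in \<open>auto simp: up_closure_def down_closure_def\<close>)
    with True show ?thesis by simp
  next
    case False
    with assms show ?thesis
      by (simp add: up_down_closure_unary_alphabet PT_height_lists)
  qed
  have "PT_height A (incomp_set A {u}) = PT_height A (up_closure A u \<union> down_closure u)"
    unfolding incomp_set_singleton using down_closure_subset_lists[OF assms(2)]
    by (intro PT_height_complement) (auto simp: up_closure_def)
  with up up_down show ?thesis by blast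
qed

end
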